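(* Let $S^0\subset X$ and let $\mu^0$ be a stationary policy such that $f(x,\mu^0(x))\in S^0$ for all $x\in S^0$. Define $\bar J_{S^0}:X\to[0,\infty]$ by $\bar J_{S^0}(x)=J_{\mu^0}(x)$ if $x\in S^0$ and $\bar J_{S^0}(x)=\infty$ otherwise. Fix an integer $\ell\ge 1$, and let $\tilde J_{S^0}$ and the rollout policy $\tilde\mu$ be defined from $\bar J_{S^0}$ as in the context. Then $$J_{\tilde\mu}(x)\le \tilde J_{S^0}(x)\le \bar J_{S^0}(x)\quad\text{for all }x\in X.$$
   Context: Deterministic infinite-horizon problem: arbitrary state space $X$ and control space $U$, dynamics $x_{k+1}=f(x_k,u_k)$ with $f:X\times U\to X$, nonempty control constraint sets $U(x)\subset U$, and stage cost $g(x,u)\in[0,\infty]$ for all $x\in X$, $u\in U(x)$ (the value $\infty$ is allowed). A stationary policy is a map $\mu:X\to U$ with $\mu(x)\in U(x)$ for all $x$. Its cost function is $J_\mu(x_0)=\sum_{k=0}^\infty g(x_k,\mu(x_k))\in[0,\infty]$, where $x_{k+1}=f(x_k,\mu(x_k))$. Standing assumption (Assumption 1): for every function $J:X\to[0,\infty]$ and every $x\in X$, the infimum $\inf_{u\in U(x)}\{g(x,u)+J(f(x,u))\}$ is attained. Rollout: given a terminal function $\bar J:X\to[0,\infty]$ and an integer $\ell\ge1$, for $x\in X$ let $\tilde J(x)$ be the optimal value of the problem of minimizing $\sum_{k=0}^{\ell-1}g(x_k,u_k)+\bar J(x_\ell)$ over $(u_0,\dots,u_{\ell-1})$ subject to $x_0=x$,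 $x_{k+1}=f(x_k,u_k)$, $u_k\in U(x_k)$ for $k=0,\dots,\ell-1$. Equivalently, $\tilde J=J_\ell$ where $J_0=\bar J$ and $J_{k+1}(x)=\min_{u\in U(x)}\{g(x,u)+J_k(f(x,u))\}$. The rollout policy $\tilde\mu$ is defined by $\tilde\mu(x)=\tilde u_0$, where $(\tilde u_0,\dots,\tilde u_{\ell-1})$ is a minimizing sequence of this problem at $x$; equivalently, $\tilde\mu(x)\in\arg\min_{u\in U(x)}\{g(x,u)+J_{\ell-1}(f(x,u))\}$. When $\bar J=\bar J_{S^0}$ the optimal value is denoted $\tilde J_{S^0}$. *)

theory Defs
  imports "HOL-Library.Extended_Nonnegative_Real"
begin

definition is_policy :: "('x \<Rightarrow> 'u set) \<Rightarrow> ('x \<Rightarrow> 'u) \<Rightarrow> bool" where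
  "is_policy U \<mu> \<longleftrightarrow> (\<forall>x. \<mu> x \<in> U x)"

definition assumption1 :: "('x \<Rightarrow> 'u \<Rightarrow> 'x) \<Rightarrow> ('x \<Rightarrow> 'u set) \<Rightarrow> ('x \<Rightarrow> 'u \<Rightarrow> ennreal) \<Rightarrow> bool" where
  "assumption1 f U g \<longleftrightarrow>
     (\<forall>J :: 'x \<Rightarrow> ennreal. \<forall>x. \<exists>u\<in>U x. g x u + J (f x u) = (INF v\<in>U x. g x v + J (f x v)))"

definition traj :: "('x \<Rightarrow> 'u \<Rightarrow> 'x) \<Rightarrow> ('x \<Rightarrow> 'u) \<Rightarrow> 'x \<Rightarrow> nat \<Rightarrow> 'x" where
  "traj f \<mu> x0 k = ((\<lambda>x. f x (\<mu> x)) ^^ k) x0"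

definition Jpol :: "('x \<Rightarrow> 'u \<Rightarrow> 'x) \<Rightarrow> ('x \<Rightarrow> 'u \<Rightarrow> ennreal) \<Rightarrow> ('x \<Rightarrow> 'u) \<Rightarrow> 'x \<Rightarrow> ennreal" where
  "Jpol f g \<mu> x0 = (\<Sum>k. g (traj f \<mu> x0 k) (\<mu> (traj f \<mu> x0 k)))"

definition bellman :: "('x \<Rightarrow> 'u \<Rightarrow> 'x) \<Rightarrow> ('x \<Rightarrow> 'u set) \<Rightarrow> ('x \<Rightarrow> 'u \<Rightarrow> ennreal)
    \<Rightarrow> ('x \<Rightarrow> ennreal) \<Rightarrow> 'x \<Rightarrow> ennreal" where
  "bellman f U g J x = (INF u\<in>U x. g x u + J (f x u))"

text \<open>J_k with J_0 = Jbar; tilde J = J_ell.\<close>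
definition lookahead :: "('x \<Rightarrow> 'u \<Rightarrow> 'x) \<Rightarrow> ('x \<Rightarrow> 'u set) \<Rightarrow> ('x \<Rightarrow> 'u \<Rightarrow> ennreal)
    \<Rightarrow> ('x \<Rightarrow> ennreal) \<Rightarrow> nat \<Rightarrow> 'x \<Rightarrow> ennreal" where
  "lookahead f U g Jbar k = (bellman f U g ^^ k) Jbar"

definition Jbar_S :: "('x \<Rightarrow> 'u \<Rightarrow> 'x) \<Rightarrow> ('x \<Rightarrow> 'u \<Rightarrow> ennreal) \<Rightarrow> 'x set \<Rightarrow> ('x \<Rightarrow> 'u) \<Rightarrow> 'x \<Rightarrow> ennreal" where
  "Jbar_S f g S0 \<mu>0 x = (if x \<in> S0 then Jpol f g \<mu>0 x else \<infinity>)"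

definition is_rollout :: "('x \<Rightarrow> 'u \<Rightarrow> 'x) \<Rightarrow> ('x \<Rightarrow> 'u set) \<Rightarrow> ('x \<Rightarrow> 'u \<Rightarrow> ennreal)
    \<Rightarrow> ('x \<Rightarrow> ennreal) \<Rightarrow> nat \<Rightarrow> ('x \<Rightarrow> 'u) \<Rightarrow> bool" where
  "is_rollout f U g Jbar l \<mu> \<longleftrightarrow>
     (\<forall>x. \<mu> x \<in> U x \<and>
          (\<forall>v\<in>U x. g x (\<mu> x) + lookahead f U g Jbar (l - 1) (f x (\<mu> x))
                    \<le> g x v + lookahead f U g Jbar (l - 1) (f x v)))"

end

theory Submission
  imports Defs
begin

text \<open>The terminal cost \<open>Jbar_S\<close> is cost improving for the Bellman operator, \<open>T Jbar_S \<le> Jbar_S\<close>, because \<open>\<mu>0\<close> keeps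
  \<open>S0\<close> invariant and its cost satisfies Bellman's equation along its own trajectory.
  By monotonicity of \<open>T\<close>, the lookahead costs \<open>J_k = T\<^sup>k Jbar_S\<close> then decrease in \<open>k\<close>,
  giving \<open>J_l \<le> Jbar_S\<close>. Since the rollout policy attains the minimum defining
  \<open>J_l = T J_(l-1)\<close>, we get \<open>g x (\<mu> x) + J_l (f x (\<mu> x)) \<le> J_l x\<close>; telescoping this along the
  rollout trajectory bounds every partial sum of its cost by \<open>J_l\<close>.\<close>

lemma traj_0 [simp]: "traj f \<mu> x 0 = x"
  unfolding traj_def by simp

lemma traj_Suc: "traj f \<mu> x (Suc k) = f (traj f \<mu> x k) (\<mu> (traj f \<mu> x k))"
  unfolding traj_def by simp

lemma traj_Suc_shift: "traj f \<mu> x (Suc k) = traj f \<mu> (f x (\<mu> x)) k"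
  unfolding traj_def by (simp only: funpow_Suc_right comp_def)

lemma Jpol_unfold: "Jpol f g \<mu> x = g x (\<mu> x) + Jpol f g \<mu> (f x (\<mu> x))"
proof -
  let ?c = "\<lambda>k. g (traj f \<mu> x k) (\<mu> (traj f \<mu> x k))"
  have "(\<lambda>k. ?c (Suc k)) sums Jpol f g \<mu> (f x (\<mu> x))"
    unfolding Jpol_def traj_Suc_shift by (rule summable_sums) (rule summableI)
  then have "?c sums (Jpol f g \<mu> (f x (\<mu> x)) + ?c 0)"
    by (rule sums_Suc)
  then show ?thesis
    unfolding Jpol_def by (simp add: sums_unique[symmetric] add.commute)
qed

lemma Jpol_le_if_step_le:
  assumes step: "\<And>y. g y (\<mu> y) + J (f y (\<mu> y)) \<le> J y"
  shows "Jpol f g \<mu> x \<le> J x"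
proof -
  have partial: "(\<Sum>k<n. g (traj f \<mu> x k) (\<mu> (traj f \<mu> x k))) + J (traj f \<mu> x n) \<le> J x" for n
  proof (induction n)
    case 0
    then show ?case by simp
  next
    case (Suc n)
    let ?y = "traj f \<mu> x n"
    have "(\<Sum>k<Suc n. g (traj f \<mu> x k) (\<mu> (traj f \<mu> x k))) + J (traj f \<mu> x (Suc n))
        = (\<Sum>k<n. g (traj f \<mu> x k) (\<mu> (traj f \<mu> x k))) + (g ?y (\<mu> ?y) + J (f ?y (\<mu> ?y)))"
      by (simp add: traj_Suc add.assoc)
    also have "\<dots> \<le> (\<Sum>k<n. g (traj f \<mu> x k) (\<mu> (traj f \<mu> x k))) + J ?y"
      by (intro add_left_mono step)
    finally show ?case
      using Suc.IH by (rule order_trans)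
  qed
  show ?thesis
    unfolding Jpol_def
  proof (rule suminf_le_const[OF summableI])
    fix n
    show "(\<Sum>k<n. g (traj f \<mu> x k) (\<mu> (traj f \<mu> x k))) \<le> J x"
      using partial[of n] by (rule order_trans[rotated]) simp
  qed
qed

lemma bellman_le: "u \<in> U x \<Longrightarrow> bellman f U g J x \<le> g x u + J (f x u)"
  unfolding bellman_def by (rule INF_lower)

lemma bellman_mono: "(\<And>y. J y \<le> J' y) \<Longrightarrow> bellman f U g J x \<le> bellman f U g J' x"
  unfolding bellman_def by (rule INF_mono) (auto intro!: bexI add_left_mono)

lemma lookahead_0 [simp]: "lookahead f U g J 0 = J"
  unfolding lookahead_def by simp

lemma lookahead_Suc: "lookahead f U g J (Suc k) = bellman f U g (lookahead f U g J k)"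
  unfolding lookahead_def by simp

lemma lookahead_Suc_le:
  assumes improving: "\<And>y. bellman f U g J y \<le> J y"
  shows "lookahead f U g J (Suc k) x \<le> lookahead f U g J k x"
proof (induction k arbitrary: x)
  case 0
  then show ?case by (simp add: lookahead_Suc improving)
next
  case (Suc k)
  then show ?case
    unfolding lookahead_Suc[of _ _ _ _ "Suc k"] lookahead_Suc[of _ _ _ _ k] by (rule bellman_mono)
qed

lemma lookahead_le_terminal:
  assumes improving: "\<And>y. bellman f U g J y \<le> J y"
  shows "lookahead f U g J k x \<le> J x"
  by (induction k) (auto intro: order_trans[OF lookahead_Suc_le[OF improving]])

lemma rollout_step_le:
  assumes improving: "\<And>y. bellman f U g J y \<le> J y"
    and "l \<ge> 1" and roll: "is_rollout f U g J l \<mu>"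
  shows "g x (\<mu> x) + lookahead f U g J l (f x (\<mu> x)) \<le> lookahead f U g J l x"
proof -
  obtain m where l: "l = Suc m"
    using \<open>l \<ge> 1\<close> by (cases l) auto
  have "lookahead f U g J l x = g x (\<mu> x) + lookahead f U g J m (f x (\<mu> x))"
    using roll unfolding l lookahead_Suc bellman_def is_rollout_def
    by (intro antisym INF_lower INF_greatest) auto
  moreover have "lookahead f U g J l (f x (\<mu> x)) \<le> lookahead f U g J m (f x (\<mu> x))"
    unfolding l by (rule lookahead_Suc_le[OF improving])
  ultimately show ?thesis
    by (simp add: add_left_mono)
qed

lemma rollout_cost_le_lookahead:
  assumes "\<And>y. bellman f U g J y \<le> J y" and "l \<ge> 1" and "is_rollout f U g J l \<mu>"
  shows "Jpol f g \<mu> x \<le> lookahead f U g J l x"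
  using rollout_step_le[OF assms] by (rule Jpol_le_if_step_le)

lemma bellman_Jbar_S_le:
  assumes "is_policy U \<mu>0" and "\<forall>x\<in>S0. f x (\<mu>0 x) \<in> S0"
  shows "bellman f U g (Jbar_S f g S0 \<mu>0) x \<le> Jbar_S f g S0 \<mu>0 x"
proof (cases "x \<in> S0")
  case True
  have "bellman f U g (Jbar_S f g S0 \<mu>0) x \<le> g x (\<mu>0 x) + Jbar_S f g S0 \<mu>0 (f x (\<mu>0 x))"
    using assms(1) by (intro bellman_le) (simp add: is_policy_def)
  also have "\<dots> = Jbar_S f g S0 \<mu>0 x"
    using True assms(2) unfolding Jbar_S_def by (simp add: Jpol_unfold[of f g \<mu>0 x])
  finally show ?thesis .
next
  case False
  then show ?thesis unfolding Jbar_S_def by simp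
qed

theorem proposition2:
  fixes f :: "'x \<Rightarrow> 'u \<Rightarrow> 'x" and U :: "'x \<Rightarrow> 'u set" and g :: "'x \<Rightarrow> 'u \<Rightarrow> ennreal"
    and S0 :: "'x set" and \<mu>0 \<mu>t :: "'x \<Rightarrow> 'u" and l :: nat
  assumes A1: "assumption1 f U g"
    and pol0: "is_policy U \<mu>0"
    and inv: "\<forall>x\<in>S0. f x (\<mu>0 x) \<in> S0"
    and l: "l \<ge> 1"
    and roll: "is_rollout f U g (Jbar_S f g S0 \<mu>0) l \<mu>t"
  shows "\<forall>x. Jpol f g \<mu>t x \<le> lookahead f U g (Jbar_S f g S0 \<mu>0) l x
           \<and> lookahead f U g (Jbar_S f g S0 \<mu>0) l x \<le> Jbar_S f g S0 \<mu>0 x"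
proof -
  have improving: "\<And>y. bellman f U g (Jbar_S f g S0 \<mu>0) y \<le> Jbar_S f g S0 \<mu>0 y"
    using pol0 inv by (rule bellman_Jbar_S_le)
  show ?thesis
    using rollout_cost_le_lookahead[OF improving l roll] lookahead_le_terminal[OF improving]
    by blast
qed

end
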